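(* For every $d\ge0$, $\mathbf S_d\,\mathbf F_d\,\mathbf S_d^{-1}=\mathbf H_d$.
   Context: All matrices here have rows and columns indexed by $-1,0,\dots,d$. For integers $i,d\ge -1$ define $f_{-1,-1}=1$, $f_{-1,d}=0$ for $d\ge0$, $f_{i,-1}=0$ for $i\ge0$, and $f_{i,d}=(i+1)!\,S(d+1,i+1)$ for $i,d\ge0$, where $S(\cdot,\cdot)$ is the Stirling number of the second kind; $\mathbf F_d=(f_{i,j})_{-1\le i,j\le d}$. The shift matrix is $\mathbf S_d=\left((-1)^{d+1+i+j}\binom{d-j}{i+1}\right)_{-1\le i,j\le d}$. For $m\ge1$ and a permutation $\sigma$ of $[m]=\{1,\dots,m\}$, $\mathrm{des}(\sigma)$ is the number of $1\le t\le m-1$ with $\sigma(t)>\sigma(t+1)$; $A(m,i,j)$ is the number of permutations $\sigma$ of $[m]$ with $\mathrm{des}(\sigma)=i$ and $\sigma(1)=j$ (and $A(m,i,j)=0$ if $i<0$). Define $h^{(d)}_{i,j}=A(d+2,i+1,j+2)$ and $\mathbf H_d=(h^{(d)}_{i,j})_{-1\le i,j\le d}$. *)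

theory Defs
  imports "Jordan_Normal_Form.Matrix" "HOL-Combinatorics.Permutations" "HOL-Combinatorics.Stirling"
begin

(* Matrices are indexed in the paper by -1,0,...,d.  A paper index k corresponds to the
   Jordan_Normal_Form row/column index k+1 in {0..d+1}; matrices have size (d+2) x (d+2)
   and rational entries. *)

definition idx_mat :: "nat \<Rightarrow> (int \<Rightarrow> int \<Rightarrow> int) \<Rightarrow> rat mat" where
  "idx_mat d g = mat (d+2) (d+2) (\<lambda>(a,b). of_int (g (int a - 1) (int b - 1)))"

definition fcoef :: "int \<Rightarrow> int \<Rightarrow> int" where
  "fcoef i e = (if i = -1 \<and> e = -1 then 1
                else if i = -1 \<or> e = -1 then 0
                else int (fact (nat i + 1) * Stirling (nat e + 1) (nat i + 1)))"

definition F_mat :: "nat \<Rightarrow> rat mat" where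
  "F_mat d = idx_mat d fcoef"

definition S_mat :: "nat \<Rightarrow> rat mat" where
  "S_mat d = idx_mat d (\<lambda>i j. (if even (int d + 1 + i + j) then 1 else -1) * int ((nat (int d - j)) choose (nat (i + 1))))"

definition des :: "nat \<Rightarrow> (nat \<Rightarrow> nat) \<Rightarrow> nat" where
  "des m \<sigma> = card {t \<in> {1..m-1}. \<sigma> t > \<sigma> (t+1)}"

definition Acount :: "nat \<Rightarrow> int \<Rightarrow> int \<Rightarrow> nat" where
  "Acount m i j = (if i < 0 then 0 else
     card {\<sigma>. \<sigma> permutes {1..m} \<and> int (des m \<sigma>) = i \<and> int (\<sigma> 1) = j})"

definition H_mat :: "nat \<Rightarrow> rat mat" where
  "H_mat d = idx_mat d (\<lambda>i j. int (Acount (d+2) (i+1) (j+2)))"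

end

theory Submission
  imports Defs "HOL-Computational_Algebra.Polynomial" "Jordan_Normal_Form.Determinant"
begin

text \<open>Read a square matrix of size d+2 column by column, column b being the coefficient vector
  of a polynomial.  The columns of S_d are then (x-1)^(d+1-b), those of H_d are the descent
  polynomials D(d+2,b) of the permutations of [d+2] with first letter b+1, and those of S_d F_d are
  the sums over k of k! S(b,k) (x-1)^(d+1-k).  So S_d F_d = H_d S_d says that the linear map L_n
  sending x^k to D(n+1,k) maps (x-1)^(n-b) to the sum over k of k! S(b,k) (x-1)^(n-k).

  Removing the first letter of a permutation shows D(n+2,k+1) - D(n+2,k) = (x-1) D(n+1,k), so
  L_(n+1) commutes with multiplication by x-1.  By induction on n only the case b = n remains.
  There D(n+2,0) is the sum of all D(n+1,k), i.e. L_n applied to the sum of the x^k, and expanding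
  that sum in powers of x-1 together with S(m+1,k+1) = sum_i C(m,i) S(i,k) gives the claim.
  Finally, S_d is inverted by the binomial matrix expressing x^c = sum_j C(c,j) (x-1)^j.\<close>

section \<open>Binomial and Stirling identities\<close>

lemma smult_sum_right: "smult c (\<Sum>i\<in>A. f i) = (\<Sum>i\<in>A. smult c (f i))"
  by (induct A rule: infinite_finite_induct) (simp_all add: smult_add_right)

lemma pCons_0_sum: "pCons 0 (\<Sum>x\<in>A. f x) = (\<Sum>x\<in>A. pCons 0 (f x))"
proof (induct A rule: infinite_finite_induct)
  case (insert x F)
  then show ?case
    using add_pCons[of 0 "f x" 0 "sum f F"] by simp
qed simp_all

lemma power_eq_sum_binomial_minus_1:
  fixes x :: "'a::comm_ring_1"
  assumes "k \<le> n"
  shows "x ^ k = (\<Sum>j\<le>n. of_nat (k choose j) * (x - 1) ^ j)"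
proof -
  have "x ^ k = ((x - 1) + 1) ^ k"
    by simp
  also have "\<dots> = (\<Sum>j\<le>k. of_nat (k choose j) * (x - 1) ^ j)"
    using binomial_ring[of "x - 1" 1 k] by simp
  also have "\<dots> = (\<Sum>j\<le>n. of_nat (k choose j) * (x - 1) ^ j)"
    using assms by (intro sum.mono_neutral_left) (simp_all add: binomial_eq_0)
  finally show ?thesis .
qed

lemma sum_powers_binomial_minus_1:
  fixes x :: "'a::comm_ring_1"
  shows "(\<Sum>k\<le>n. x ^ k) = (\<Sum>j\<le>n. of_nat (Suc n choose Suc j) * (x - 1) ^ j)"
proof -
  have "(\<Sum>k\<le>n. x ^ k) = (\<Sum>k\<le>n. \<Sum>j\<le>n. of_nat (k choose j) * (x - 1) ^ j)"
    by (intro sum.cong refl power_eq_sum_binomial_minus_1) simp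
  also have "\<dots> = (\<Sum>j\<le>n. of_nat (\<Sum>k\<le>n. k choose j) * (x - 1) ^ j)"
    by (subst sum.swap) (simp add: sum_distrib_right)
  finally show ?thesis
    by (simp add: sum_choose_upper)
qed

lemma coeff_X_minus_1_power:
  "coeff ([:-1, 1:] ^ m :: 'a::comm_ring_1 poly) a = (-1) ^ (m - a) * of_nat (m choose a)"
proof (cases "a \<le> m")
  case False
  have "degree ([:-1, 1:] ^ m :: 'a poly) \<le> m"
    using degree_power_le[of "[:-1, 1:] :: 'a poly" m] by simp
  then show ?thesis
    using False by (simp add: coeff_eq_0 binomial_eq_0)
qed (simp add: coeff_linear_poly_power)

lemma Stirling_Suc_binomial_sum:
  "Stirling (Suc m) (Suc k) = (\<Sum>i\<le>m. (m choose i) * Stirling i k)"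
proof (induction m arbitrary: k)
  case 0
  then show ?case by (cases k) auto
next
  case (Suc m)
  have shifted: "(\<Sum>i\<le>m. (m choose i) * Stirling (Suc i) k) =
      k * Stirling (Suc m) (Suc k) + (if k = 0 then 0 else Stirling (Suc m) k)"
  proof (cases k)
    case (Suc k')
    have "(\<Sum>i\<le>m. (m choose i) * Stirling (Suc i) k) =
        k * (\<Sum>i\<le>m. (m choose i) * Stirling i k) + (\<Sum>i\<le>m. (m choose i) * Stirling i k')"
      by (simp add: Suc sum.distrib sum_distrib_left algebra_simps)
    then show ?thesis
      using Suc.IH[of k] Suc.IH[of k'] Suc by simp
  qed simp
  have lower: "Stirling 0 k + (\<Sum>i\<le>m. (m choose Suc i) * Stirling (Suc i) k) =
      (\<Sum>i\<le>m. (m choose i) * Stirling i k)"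
    using sum.atMost_Suc_shift[of "\<lambda>i. (m choose i) * Stirling i k" m] by (simp add: binomial_eq_0)
  have "(\<Sum>i\<le>Suc m. (Suc m choose i) * Stirling i k) =
      Stirling 0 k + (\<Sum>i\<le>m. (m choose i) * Stirling (Suc i) k + (m choose Suc i) * Stirling (Suc i) k)"
    by (simp only: sum.atMost_Suc_shift binomial_n_0 binomial_Suc_Suc add_mult_distrib mult_1)
  also have "\<dots> = (\<Sum>i\<le>m. (m choose i) * Stirling i k) + (\<Sum>i\<le>m. (m choose i) * Stirling (Suc i) k)"
    by (simp add: sum.distrib lower[symmetric])
  also have "\<dots> = Stirling (Suc (Suc m)) (Suc k)"
    using Suc.IH[of k] shifted by (cases k) simp_all
  finally show ?case ..
qed

lemma fact_Stirling_binomial_sum: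
  "(\<Sum>j\<le>n. (Suc n choose Suc j) * (fact k * Stirling (n - j) k)) = fact (Suc k) * Stirling (Suc n) (Suc k)"
proof -
  have "(\<Sum>j\<le>n. (Suc n choose Suc j) * (fact k * Stirling (n - j) k)) =
      (\<Sum>i\<le>n. (Suc n choose i) * (fact k * Stirling i k))"
  proof (rule sum.reindex_bij_witness[where i = "\<lambda>i. n - i" and j = "\<lambda>i. n - i"])
    fix a assume "a \<in> {..n}"
    then have "Suc n choose (n - a) = Suc n choose Suc a"
      using binomial_symmetric[of "n - a" "Suc n"] by (simp add: Suc_diff_le)
    then show "(Suc n choose (n - a)) * (fact k * Stirling (n - a) k) =
        (Suc n choose Suc a) * (fact k * Stirling (n - a) k)"
      by simp
  qed auto
  moreover have "fact k * Stirling (Suc (Suc n)) (Suc k) =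
      (\<Sum>i\<le>Suc n. (Suc n choose i) * (fact k * Stirling i k))"
    by (simp only: Stirling_Suc_binomial_sum sum_distrib_left mult.left_commute)
  moreover have "fact k * Stirling (Suc (Suc n)) (Suc k) =
      fact (Suc k) * Stirling (Suc n) (Suc k) + fact k * Stirling (Suc n) k"
    by (simp only: Stirling.simps(4)[of "Suc n" k]) (simp add: algebra_simps del: Stirling.simps)
  ultimately show ?thesis
    by simp
qed

section \<open>Prepending a first letter to a permutation\<close>

definition shift_above :: "nat \<Rightarrow> nat \<Rightarrow> nat" where
  "shift_above j x = (if x < j then x else Suc x)"

text \<open>For a permutation \<open>\<tau>\<close> of \<open>{1..m}\<close>, \<open>cons_perm m j \<tau>\<close> is the permutation of \<open>{1..m+1}\<close>
  with first letter \<open>j\<close> whose remaining letters are in the same relative order as \<open>\<tau>\<close>.\<close>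

definition cons_perm :: "nat \<Rightarrow> nat \<Rightarrow> (nat \<Rightarrow> nat) \<Rightarrow> nat \<Rightarrow> nat" where
  "cons_perm m j \<tau> = (\<lambda>t. if t = 1 then j
     else if 2 \<le> t \<and> t \<le> Suc m then shift_above j (\<tau> (t - 1)) else t)"

definition tail_perm :: "nat \<Rightarrow> (nat \<Rightarrow> nat) \<Rightarrow> nat \<Rightarrow> nat" where
  "tail_perm m \<sigma> = (\<lambda>t. if 1 \<le> t \<and> t \<le> m then
      (if \<sigma> (Suc t) < \<sigma> 1 then \<sigma> (Suc t) else \<sigma> (Suc t) - 1) else t)"

lemma cons_perm_Suc_0 [simp]: "cons_perm m j \<tau> (Suc 0) = j"
  by (simp add: cons_perm_def)

lemma cons_perm_permutes:
  assumes j: "j \<in> {1..Suc m}" and \<tau>: "\<tau> permutes {1..m}"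
  shows "cons_perm m j \<tau> permutes {1..Suc m}"
proof (rule bij_imp_permutes)
  have range: "\<tau> x \<in> {1..m} \<longleftrightarrow> x \<in> {1..m}" for x
    using permutes_in_image[OF \<tau>] by blast
  have inj: "\<tau> x = \<tau> y \<Longrightarrow> x = y" for x y
    using permutes_inj[OF \<tau>] by (simp add: inj_eq)
  have "cons_perm m j \<tau> ` {1..Suc m} \<subseteq> {1..Suc m}"
    using j range by (force simp: cons_perm_def shift_above_def)
  moreover have "inj_on (cons_perm m j \<tau>) {1..Suc m}"
    by (rule inj_onI) (auto simp: cons_perm_def shift_above_def split: if_splits dest!: inj)
  ultimately show "bij_betw (cons_perm m j \<tau>) {1..Suc m} {1..Suc m}"
    by (simp add: bij_betw_def endo_inj_surj)
qed (auto simp: cons_perm_def)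

lemma tail_perm_permutes:
  assumes \<sigma>: "\<sigma> permutes {1..Suc m}"
  shows "tail_perm m \<sigma> permutes {1..m}"
proof (rule bij_imp_permutes)
  have range: "\<sigma> x \<in> {1..Suc m} \<longleftrightarrow> x \<in> {1..Suc m}" for x
    using permutes_in_image[OF \<sigma>] by blast
  have inj: "\<sigma> x = \<sigma> y \<longleftrightarrow> x = y" for x y
    using permutes_inj[OF \<sigma>] by (simp add: inj_eq)
  have "tail_perm m \<sigma> ` {1..m} \<subseteq> {1..m}"
  proof
    fix y assume "y \<in> tail_perm m \<sigma> ` {1..m}"
    then obtain t where t: "t \<in> {1..m}" "y = tail_perm m \<sigma> t" by blast
    then have "\<sigma> (Suc t) \<in> {1..Suc m}" "\<sigma> (Suc t) \<noteq> \<sigma> 1" "\<sigma> 1 \<in> {1..Suc m}"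
      using range inj by auto
    then show "y \<in> {1..m}" using t by (auto simp: tail_perm_def)
  qed
  moreover have "inj_on (tail_perm m \<sigma>) {1..m}"
  proof (rule inj_onI)
    fix x y assume xy: "x \<in> {1..m}" "y \<in> {1..m}" "tail_perm m \<sigma> x = tail_perm m \<sigma> y"
    moreover have "\<sigma> (Suc x) \<noteq> \<sigma> 1" "\<sigma> (Suc y) \<noteq> \<sigma> 1"
      using xy by (simp_all add: inj)
    ultimately have "\<sigma> (Suc x) = \<sigma> (Suc y)"
      by (auto simp: tail_perm_def split: if_splits)
    then show "x = y"
      by (simp add: inj)
  qed
  ultimately show "bij_betw (tail_perm m \<sigma>) {1..m} {1..m}"
    by (simp add: bij_betw_def endo_inj_surj)
qed (auto simp: tail_perm_def)

lemma tail_perm_cons_perm: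
  assumes "\<tau> permutes {1..m}"
  shows "tail_perm m (cons_perm m j \<tau>) = \<tau>"
  using permutes_not_in[OF assms] by (auto simp: tail_perm_def cons_perm_def shift_above_def)

lemma cons_perm_tail_perm:
  assumes \<sigma>: "\<sigma> permutes {1..Suc m}"
  shows "cons_perm m (\<sigma> 1) (tail_perm m \<sigma>) = \<sigma>"
proof
  fix t
  have "\<sigma> t \<noteq> \<sigma> 1" if "t \<noteq> 1"
    using that permutes_inj[OF \<sigma>] by (simp add: inj_eq)
  then show "cons_perm m (\<sigma> 1) (tail_perm m \<sigma>) t = \<sigma> t"
    using permutes_not_in[OF \<sigma>, of t]
    by (auto simp: cons_perm_def tail_perm_def shift_above_def)
qed

lemma bij_betw_cons_perm:
  assumes "j \<in> {1..Suc m}"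
  shows "bij_betw (cons_perm m j) {\<tau>. \<tau> permutes {1..m}} {\<sigma>. \<sigma> permutes {1..Suc m} \<and> \<sigma> 1 = j}"
proof (rule bij_betw_byWitness[where f' = "tail_perm m"])
  show "\<forall>\<tau> \<in> {\<tau>. \<tau> permutes {1..m}}. tail_perm m (cons_perm m j \<tau>) = \<tau>"
    by (simp add: tail_perm_cons_perm)
  show "\<forall>\<sigma> \<in> {\<sigma>. \<sigma> permutes {1..Suc m} \<and> \<sigma> 1 = j}. cons_perm m j (tail_perm m \<sigma>) = \<sigma>"
    using cons_perm_tail_perm by blast
  show "cons_perm m j ` {\<tau>. \<tau> permutes {1..m}} \<subseteq> {\<sigma>. \<sigma> permutes {1..Suc m} \<and> \<sigma> 1 = j}"
    using assms cons_perm_permutes by auto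
  show "tail_perm m ` {\<sigma>. \<sigma> permutes {1..Suc m} \<and> \<sigma> 1 = j} \<subseteq> {\<tau>. \<tau> permutes {1..m}}"
    using tail_perm_permutes by auto
qed

lemma des_cons_perm:
  assumes "1 \<le> m" and "\<tau> permutes {1..m}"
  shows "des (Suc m) (cons_perm m j \<tau>) = des m \<tau> + (if \<tau> 1 < j then 1 else 0)"
proof -
  let ?\<sigma> = "cons_perm m j \<tau>"
  have \<sigma>: "?\<sigma> (Suc t) = shift_above j (\<tau> t)" if "t \<in> {1..m}" for t
    using that by (simp add: cons_perm_def)
  have "{t \<in> {1..m}. ?\<sigma> (Suc t) < ?\<sigma> t} =
      {t \<in> {1}. \<tau> 1 < j} \<union> Suc ` {t \<in> {1..m - 1}. \<tau> (Suc t) < \<tau> t}"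
    (is "?L = ?A \<union> ?B")
  proof (intro equalityI subsetI)
    fix t assume "t \<in> ?L"
    then show "t \<in> ?A \<union> ?B"
      using assms(1) \<sigma>[of t] \<sigma>[of "t - 1"]
      by (cases t) (auto simp: cons_perm_def shift_above_def image_iff split: if_splits)
  next
    fix t assume "t \<in> ?A \<union> ?B"
    then show "t \<in> ?L"
      using assms(1) \<sigma>[of t] \<sigma>[of "t - 1"] by (auto simp: shift_above_def)
  qed
  moreover have "card (?A \<union> ?B) = (if \<tau> 1 < j then 1 else 0) + des m \<tau>"
    by (subst card_Un_disjoint) (auto simp: des_def card_image)
  ultimately show ?thesis
    by (simp add: des_def)
qed

lemma sum_permutes_by_first:
  "(\<Sum>\<tau> | \<tau> permutes {1..Suc n}. f \<tau>) = (\<Sum>k\<le>n. \<Sum>\<tau> | \<tau> permutes {1..Suc n} \<and> \<tau> 1 = Suc k. f \<tau>)"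
proof -
  have "\<tau> 1 \<in> {1..Suc n}" if "\<tau> permutes {1..Suc n}" for \<tau>
    using permutes_in_image[OF that, of 1] by simp
  then have "(\<lambda>\<tau>. \<tau> 1) ` {\<tau>. \<tau> permutes {1..Suc n}} \<subseteq> {1..Suc n}"
    by blast
  from sum.group[OF finite_permutations[OF finite_atLeastAtMost] finite_atLeastAtMost this]
  have "(\<Sum>\<tau> | \<tau> permutes {1..Suc n}. f \<tau>) = (\<Sum>j\<in>{1..Suc n}. \<Sum>\<tau> | \<tau> permutes {1..Suc n} \<and> \<tau> 1 = j. f \<tau>)"
    by (simp only: mem_Collect_eq) (rule sym)
  also have "\<dots> = (\<Sum>k\<le>n. \<Sum>\<tau> | \<tau> permutes {1..Suc n} \<and> \<tau> 1 = Suc k. f \<tau>)"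
    by (simp only: One_nat_def sum.atLeast1_atMost_eq lessThan_Suc_atMost)
  finally show ?thesis .
qed

section \<open>Descent polynomials\<close>

definition des_poly :: "nat \<Rightarrow> nat \<Rightarrow> 'a::comm_semiring_1 poly" where
  "des_poly m k = (\<Sum>\<sigma> | \<sigma> permutes {1..m} \<and> \<sigma> 1 = Suc k. monom 1 (des m \<sigma>))"

lemma coeff_des_poly:
  "coeff (des_poly m k) a = of_nat (card {\<sigma>. \<sigma> permutes {1..m} \<and> des m \<sigma> = a \<and> \<sigma> 1 = Suc k})"
proof -
  have "finite {\<sigma>. \<sigma> permutes {1..m} \<and> \<sigma> 1 = Suc k}"
    by (simp add: finite_permutations)
  then show ?thesis
    unfolding des_poly_def coeff_sum coeff_monom
    by (simp add: sum.If_cases Int_def conj_commute conj_left_commute)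
qed

lemma des_poly_Suc:
  assumes "k \<le> Suc n"
  shows "des_poly (Suc (Suc n)) k =
    pCons 0 (\<Sum>k'<k. des_poly (Suc n) k') + (\<Sum>k'\<in>{k..n}. des_poly (Suc n) k')"
proof -
  have "des_poly (Suc (Suc n)) k =
      (\<Sum>\<tau> | \<tau> permutes {1..Suc n}. monom 1 (des (Suc (Suc n)) (cons_perm (Suc n) (Suc k) \<tau>)))"
    unfolding des_poly_def
    by (rule sum.reindex_bij_betw[symmetric], rule bij_betw_cons_perm) (use assms in auto)
  also have "\<dots> = (\<Sum>\<tau> | \<tau> permutes {1..Suc n}. monom 1 (des (Suc n) \<tau> + (if \<tau> 1 < Suc k then 1 else 0)))"
    by (rule sum.cong) (simp_all add: des_cons_perm)
  also have "\<dots> = (\<Sum>k'\<le>n. if k' < k then pCons 0 (des_poly (Suc n) k') else des_poly (Suc n) k')"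
    unfolding sum_permutes_by_first des_poly_def
    by (rule sum.cong) (auto simp: pCons_0_sum monom_Suc intro!: sum.cong)
  also have "\<dots> = (\<Sum>k'<k. pCons 0 (des_poly (Suc n) k')) + (\<Sum>k'\<in>{k..n}. des_poly (Suc n) k')"
  proof -
    have "{..n} \<inter> {k'. k' < k} = {..<k}" "{..n} \<inter> - {k'. k' < k} = {k..n}"
      using assms by auto
    then show ?thesis by (simp add: sum.If_cases)
  qed
  finally show ?thesis by (simp add: pCons_0_sum)
qed

lemma des_poly_Suc_diff:
  assumes "k \<le> n"
  shows "des_poly (Suc (Suc n)) (Suc k) - des_poly (Suc (Suc n)) k =
    [:-1, 1:] * (des_poly (Suc n) k :: 'a::comm_ring_1 poly)"
proof -
  have "{k..n} = insert k {Suc k..n}" "{..<Suc k} = insert k {..<k}"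
    using assms by auto
  then show ?thesis
    using assms by (simp add: des_poly_Suc pCons_0_sum[symmetric] algebra_simps)
qed

definition des_map :: "nat \<Rightarrow> 'a::comm_semiring_1 poly \<Rightarrow> 'a poly" where
  "des_map n p = (\<Sum>k\<le>n. smult (coeff p k) (des_poly (Suc n) k))"

lemma des_map_linear:
  "des_map n (\<Sum>i\<in>A. smult (c i) (f i)) = (\<Sum>i\<in>A. smult (c i) (des_map n (f i)))"
  by (induct A rule: infinite_finite_induct)
     (simp_all add: des_map_def coeff_sum smult_add_left sum.distrib smult_sum_right)

lemma des_map_monom:
  assumes "k \<le> n"
  shows "des_map n (monom 1 k) = des_poly (Suc n) k"
proof -
  have "des_map n (monom 1 k) = (\<Sum>k'\<le>n. if k = k' then des_poly (Suc n) k' else 0)"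
    unfolding des_map_def by (rule sum.cong) simp_all
  then show ?thesis
    using assms by simp
qed

lemma des_map_mult_X_minus_1:
  fixes r :: "'a::comm_ring_1 poly"
  assumes "degree r \<le> n"
  shows "des_map (Suc n) ([:-1, 1:] * r) = [:-1, 1:] * des_map n r"
proof -
  let ?P = "des_poly (Suc (Suc n))"
  have shift: "(\<Sum>k\<le>Suc n. smult (coeff (pCons 0 r) k) (?P k)) = (\<Sum>k\<le>n. smult (coeff r k) (?P (Suc k)))"
    by (simp only: sum.atMost_Suc_shift coeff_pCons_0 coeff_pCons_Suc smult_0_left add_0_left)
  have top: "(\<Sum>k\<le>Suc n. smult (coeff r k) (?P k)) = (\<Sum>k\<le>n. smult (coeff r k) (?P k))"
    using assms by (simp add: coeff_eq_0)
  have "des_map (Suc n) ([:-1, 1:] * r) =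
      (\<Sum>k\<le>Suc n. smult (coeff (pCons 0 r) k) (?P k)) - (\<Sum>k\<le>Suc n. smult (coeff r k) (?P k))"
    by (simp add: des_map_def smult_diff_left sum_subtractf)
  also have "\<dots> = (\<Sum>k\<le>n. smult (coeff r k) (?P (Suc k) - ?P k))"
    unfolding shift top by (simp add: sum_subtractf smult_diff_right)
  also have "\<dots> = [:-1, 1:] * des_map n r"
    by (simp add: des_map_def des_poly_Suc_diff sum_distrib_left del: mult_pCons_left)
  finally show ?thesis .
qed

definition surj_poly :: "nat \<Rightarrow> nat \<Rightarrow> 'a::comm_ring_1 poly" where
  "surj_poly n b = (\<Sum>k\<le>n. smult (of_nat (fact k * Stirling b k)) ([:-1, 1:] ^ (n - k)))"

lemma surj_poly_Suc:
  assumes "b \<le> n"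
  shows "surj_poly (Suc n) b = [:-1, 1:] * surj_poly n b"
  using assms
  by (simp add: surj_poly_def sum_distrib_left Suc_diff_le del: mult_pCons_left)

lemma surj_poly_Suc_diag:
  "(\<Sum>j\<le>n. smult (of_nat (Suc n choose Suc j)) (surj_poly n (n - j))) = surj_poly (Suc n) (Suc n)"
proof -
  let ?c = "\<lambda>j k. (Suc n choose Suc j) * (fact k * Stirling (n - j) k)"
  have "(\<Sum>j\<le>n. smult (of_nat (Suc n choose Suc j)) (surj_poly n (n - j))) =
      (\<Sum>j\<le>n. \<Sum>k\<le>n. smult (of_nat (?c j k)) ([:-1, 1:] ^ (n - k)))"
    by (simp only: surj_poly_def smult_sum_right smult_smult of_nat_mult)
  also have "\<dots> = (\<Sum>k\<le>n. smult (of_nat (\<Sum>j\<le>n. ?c j k)) ([:-1, 1:] ^ (n - k)))"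
    by (subst sum.swap) (simp only: of_nat_sum smult_sum)
  also have "\<dots> = (\<Sum>k\<le>n. smult (of_nat (fact (Suc k) * Stirling (Suc n) (Suc k))) ([:-1, 1:] ^ (n - k)))"
    by (simp only: fact_Stirling_binomial_sum)
  also have "\<dots> = surj_poly (Suc n) (Suc n)"
    unfolding surj_poly_def
    by (simp only: sum.atMost_Suc_shift Stirling.simps(3) mult_0_right of_nat_0 smult_0_left
        add_0_left diff_Suc_Suc)
  finally show ?thesis .
qed

lemma des_map_X_minus_1_power:
  assumes "b \<le> n"
  shows "des_map n ([:-1, 1:] ^ (n - b)) = (surj_poly n b :: 'a::comm_ring_1 poly)"
  using assms
proof (induction n arbitrary: b)
  case 0
  have "{\<sigma>. \<sigma> permutes {1..Suc 0} \<and> \<sigma> 1 = 1} = {id}"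
    by auto
  then have "des_poly 1 0 = (1 :: 'a poly)"
    by (simp add: des_poly_def des_def)
  moreover have "surj_poly 0 0 = (1 :: 'a poly)"
    by (simp add: surj_poly_def one_pCons)
  moreover have "des_map 0 1 = (des_poly 1 0 :: 'a poly)"
    using des_map_monom[of 0 0] by simp
  ultimately show ?case
    using 0 by simp
next
  case (Suc n)
  show ?case
  proof (cases "b \<le> n")
    case True
    have "degree ([:-1, 1:] ^ (n - b) :: 'a poly) \<le> n"
      using degree_power_le[of "[:-1, 1:] :: 'a poly" "n - b"] by simp
    then show ?thesis
      using Suc.IH[OF True] True
      by (simp add: Suc_diff_le des_map_mult_X_minus_1 surj_poly_Suc del: mult_pCons_left)
  next
    case False
    then have b: "b = Suc n"
      using Suc.prems by simp
    have "des_map (Suc n) ([:-1, 1:] ^ (Suc n - b)) = des_poly (Suc (Suc n)) 0"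
      using b des_map_monom[of 0 "Suc n"] by simp
    also have "\<dots> = (\<Sum>k\<le>n. des_map n (monom 1 k))"
      by (simp add: des_poly_Suc des_map_monom atLeast0AtMost)
    also have "\<dots> = des_map n (\<Sum>k\<le>n. monom 1 k)"
      by (simp add: des_map_linear[where c = "\<lambda>_. 1", simplified])
    also have "(\<Sum>k\<le>n. monom 1 k) = (\<Sum>j\<le>n. smult (of_nat (Suc n choose Suc j)) ([:-1, 1:] ^ j) :: 'a poly)"
      using sum_powers_binomial_minus_1[of "[:0, 1:] :: 'a poly" n]
      by (simp add: monom_altdef of_nat_poly one_pCons del: binomial_Suc_Suc)
    also have "des_map n \<dots> = (\<Sum>j\<le>n. smult (of_nat (Suc n choose Suc j)) (des_map n ([:-1, 1:] ^ j)))"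
      by (rule des_map_linear)
    also have "\<dots> = (\<Sum>j\<le>n. smult (of_nat (Suc n choose Suc j)) (surj_poly n (n - j)))"
    proof -
      have "des_map n ([:-1, 1:] ^ j) = (surj_poly n (n - j) :: 'a poly)" if "j \<le> n" for j
        using Suc.IH[of "n - j"] that by simp
      then show ?thesis
        by (intro sum.cong) simp_all
    qed
    also have "\<dots> = surj_poly (Suc n) b"
      using b surj_poly_Suc_diag by simp
    finally show ?thesis .
  qed
qed

section \<open>Matrices whose columns are coefficient vectors\<close>

definition coeff_mat :: "nat \<Rightarrow> (nat \<Rightarrow> 'a::zero poly) \<Rightarrow> 'a mat" where
  "coeff_mat n p = mat n n (\<lambda>(a, b). coeff (p b) a)"

lemma coeff_mat_carrier [simp]: "coeff_mat n p \<in> carrier_mat n n"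
  by (simp add: coeff_mat_def)

lemma coeff_mat_cong:
  "(\<And>b. b < n \<Longrightarrow> p b = q b) \<Longrightarrow> coeff_mat n p = coeff_mat n q"
  by (auto simp: coeff_mat_def)

lemma coeff_mat_mult:
  fixes p :: "nat \<Rightarrow> 'a::comm_semiring_1 poly"
  assumes "A \<in> carrier_mat n n"
  shows "coeff_mat n p * A = coeff_mat n (\<lambda>b. \<Sum>k<n. smult (A $$ (k, b)) (p k))"
  using assms
  by (auto simp: coeff_mat_def scalar_prod_def coeff_sum atLeast0LessThan mult.commute)

lemma coeff_mat_power_X: "coeff_mat n (\<lambda>c. [:0, 1:] ^ c) = (1\<^sub>m n :: 'a::comm_semiring_1 mat)"
  by (auto simp: coeff_mat_def monom_altdef[of 1, simplified, symmetric])

lemma invertible_mat_if_right_inverse: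
  fixes A :: "'a::field mat"
  assumes "A \<in> carrier_mat n n" "B \<in> carrier_mat n n" "A * B = 1\<^sub>m n"
  shows "invertible_mat A"
  using assms mat_mult_left_right_inverse[OF assms]
  unfolding invertible_mat_def inverts_mat_def square_mat.simps by auto

lemma mult_inverse_eq_if_intertwines:
  fixes A :: "'a::semiring_1 mat"
  assumes A: "A \<in> carrier_mat n n" and Y: "Y \<in> carrier_mat n n"
    and inv: "inverts_mat A B" "inverts_mat B A" and intertwine: "A * X = Y * A"
  shows "A * X * B = Y"
proof -
  have AB: "A * B = 1\<^sub>m n"
    using inv(1) A by (simp add: inverts_mat_def)
  moreover have "B * A = 1\<^sub>m (dim_row B)"
    using inv(2) by (simp add: inverts_mat_def)
  ultimately have "B \<in> carrier_mat n n"
    using A by (metis carrier_matD(2) carrier_matI index_mult_mat(3) index_one_mat(3))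
  then show ?thesis
    using A Y AB by (simp add: intertwine assoc_mult_mat[of Y n n A n B])
qed

lemma S_mat_eq_coeff_mat: "S_mat d = coeff_mat (d + 2) (\<lambda>b. [:-1, 1:] ^ (d + 1 - b))"
proof (rule eq_matI)
  fix a b assume "a < dim_row (coeff_mat (d + 2) (\<lambda>b. [:-1, 1:] ^ (d + 1 - b)) :: rat mat)"
    "b < dim_col (coeff_mat (d + 2) (\<lambda>b. [:-1, 1:] ^ (d + 1 - b)) :: rat mat)"
  then have ab: "a < d + 2" "b < d + 2"
    by (simp_all add: coeff_mat_def)
  let ?e = "int d + 1 + (int a - 1) + (int b - 1)"
  have "S_mat d $$ (a, b) =
      of_int ((if even ?e then 1 else -1) * int (nat (int d - (int b - 1)) choose nat (int a - 1 + 1)))"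
    using ab by (simp add: S_mat_def idx_mat_def)
  also have "nat (int d - (int b - 1)) = d + 1 - b"
    using ab by auto
  also have "nat (int a - 1 + 1) = a"
    by simp
  also have "of_int ((if even ?e then 1 else -1) * int (d + 1 - b choose a)) =
      ((-1) ^ (d + 1 - b - a) * of_nat (d + 1 - b choose a) :: rat)"
  proof (cases "a \<le> d + 1 - b")
    case True
    define c where "c = d + 1 - b - a"
    have "?e = int c + 2 * (int a + int b - 1)"
      using ab True by (simp add: c_def)
    then have "even ?e \<longleftrightarrow> even c"
      by presburger
    then show ?thesis
      unfolding c_def[symmetric] by (cases "even c") (simp_all add: minus_one_power_iff)
  qed (simp add: binomial_eq_0)
  also have "\<dots> = coeff_mat (d + 2) (\<lambda>b. [:-1, 1:] ^ (d + 1 - b)) $$ (a, b)"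
    using ab by (simp add: coeff_mat_def coeff_X_minus_1_power)
  finally show "S_mat d $$ (a, b) = coeff_mat (d + 2) (\<lambda>b. [:-1, 1:] ^ (d + 1 - b)) $$ (a, b)" .
qed (simp_all add: S_mat_def idx_mat_def coeff_mat_def)

lemma S_mat_carrier: "S_mat d \<in> carrier_mat (d + 2) (d + 2)"
  by (simp add: S_mat_eq_coeff_mat)

lemma H_mat_eq_coeff_mat: "H_mat d = coeff_mat (d + 2) (des_poly (d + 2))"
proof (rule eq_matI)
  fix a b assume "a < dim_row (coeff_mat (d + 2) (des_poly (d + 2)) :: rat mat)"
    "b < dim_col (coeff_mat (d + 2) (des_poly (d + 2)) :: rat mat)"
  moreover have "{\<sigma>. \<sigma> permutes {1..d + 2} \<and> int (des (d + 2) \<sigma>) = int a \<and> int (\<sigma> 1) = int b + 1} =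
      {\<sigma>. \<sigma> permutes {1..d + 2} \<and> des (d + 2) \<sigma> = a \<and> \<sigma> 1 = Suc b}"
    by auto
  ultimately show "H_mat d $$ (a, b) = coeff_mat (d + 2) (des_poly (d + 2)) $$ (a, b)"
    by (simp add: H_mat_def idx_mat_def coeff_mat_def Acount_def coeff_des_poly add.commute)
qed (simp_all add: H_mat_def idx_mat_def coeff_mat_def)

lemma F_mat_entry:
  assumes "k < d + 2" "b < d + 2"
  shows "F_mat d $$ (k, b) = of_nat (fact k * Stirling b k)"
  using assms by (cases k; cases b) (simp_all add: F_mat_def idx_mat_def fcoef_def)

lemma F_mat_carrier: "F_mat d \<in> carrier_mat (d + 2) (d + 2)"
  by (simp add: F_mat_def idx_mat_def)

lemma S_mat_F_mat: "S_mat d * F_mat d = coeff_mat (d + 2) (surj_poly (d + 1))"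
proof -
  have "S_mat d * F_mat d =
      coeff_mat (d + 2) (\<lambda>b. \<Sum>k<d + 2. smult (F_mat d $$ (k, b)) ([:-1, 1:] ^ (d + 1 - k)))"
    unfolding S_mat_eq_coeff_mat by (rule coeff_mat_mult[OF F_mat_carrier])
  also have "\<dots> = coeff_mat (d + 2) (surj_poly (d + 1))"
    by (rule coeff_mat_cong) (simp add: surj_poly_def F_mat_entry lessThan_Suc_atMost)
  finally show ?thesis .
qed

lemma H_mat_S_mat: "H_mat d * S_mat d = coeff_mat (d + 2) (\<lambda>b. des_map (d + 1) ([:-1, 1:] ^ (d + 1 - b)))"
proof -
  have "H_mat d * S_mat d =
      coeff_mat (d + 2) (\<lambda>b. \<Sum>k<d + 2. smult (S_mat d $$ (k, b)) (des_poly (d + 2) k))"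
    unfolding H_mat_eq_coeff_mat by (rule coeff_mat_mult[OF S_mat_carrier])
  also have "\<dots> = coeff_mat (d + 2) (\<lambda>b. des_map (d + 1) ([:-1, 1:] ^ (d + 1 - b)))"
    by (rule coeff_mat_cong) (simp add: S_mat_eq_coeff_mat coeff_mat_def des_map_def lessThan_Suc_atMost)
  finally show ?thesis .
qed

lemma S_mat_F_mat_eq_H_mat_S_mat: "S_mat d * F_mat d = H_mat d * S_mat d"
  unfolding S_mat_F_mat H_mat_S_mat
  by (rule coeff_mat_cong) (simp add: des_map_X_minus_1_power)

definition S_inv_mat :: "nat \<Rightarrow> rat mat" where
  "S_inv_mat d = mat (d + 2) (d + 2) (\<lambda>(b, c). of_nat (c choose (d + 1 - b)))"

lemma S_mat_S_inv_mat: "S_mat d * S_inv_mat d = 1\<^sub>m (d + 2)"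
proof -
  have "S_mat d * S_inv_mat d =
      coeff_mat (d + 2) (\<lambda>c. \<Sum>b<d + 2. smult (of_nat (c choose (d + 1 - b))) ([:-1, 1:] ^ (d + 1 - b)))"
    unfolding S_mat_eq_coeff_mat
    by (subst coeff_mat_mult) (auto simp: S_inv_mat_def intro!: coeff_mat_cong sum.cong)
  also have "\<dots> = coeff_mat (d + 2) (\<lambda>c. [:0, 1:] ^ c)"
  proof (rule coeff_mat_cong)
    fix c assume "c < d + 2"
    then have "[:0, 1:] ^ c = (\<Sum>j<d + 2. of_nat (c choose j) * ([:0, 1:] - 1) ^ j :: rat poly)"
      using power_eq_sum_binomial_minus_1[of c "d + 1" "[:0, 1:] :: rat poly"]
      by (simp add: lessThan_Suc_atMost)
    also have "\<dots> = (\<Sum>b<d + 2. smult (of_nat (c choose (d + 1 - b))) ([:-1, 1:] ^ (d + 1 - b)))"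
      using sum.nat_diff_reindex[of "\<lambda>j. smult (of_nat (c choose j)) ([:-1, 1:] ^ j :: rat poly)" "d + 2"]
      by (simp add: of_nat_poly one_pCons)
    finally show "(\<Sum>b<d + 2. smult (of_nat (c choose (d + 1 - b))) ([:-1, 1:] ^ (d + 1 - b))) =
        ([:0, 1:] ^ c :: rat poly)"
      by (rule sym)
  qed
  finally show ?thesis
    by (simp add: coeff_mat_power_X)
qed

theorem lemma2p5:
  fixes d :: nat
  shows "invertible_mat (S_mat d) \<and>
    (\<forall>Sinv. inverts_mat (S_mat d) Sinv \<and> inverts_mat Sinv (S_mat d) \<longrightarrow>
       S_mat d * F_mat d * Sinv = H_mat d)"
proof (intro conjI allI impI)
  show "invertible_mat (S_mat d)"
    by (rule invertible_mat_if_right_inverse[OF S_mat_carrier _ S_mat_S_inv_mat])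
       (simp add: S_inv_mat_def)
  fix Sinv assume "inverts_mat (S_mat d) Sinv \<and> inverts_mat Sinv (S_mat d)"
  then show "S_mat d * F_mat d * Sinv = H_mat d"
    by (intro mult_inverse_eq_if_intertwines[OF S_mat_carrier _ _ _ S_mat_F_mat_eq_H_mat_S_mat])
       (simp_all add: H_mat_eq_coeff_mat)
qed

end
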